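(* In every approval-based SCV instance, every committee maximizing the IW-PAV score among all committees satisfies IW-JR.
   Context: An approval-based sub-committee voting (SCV) instance consists of a set of voters $N=\{1,\ldots,n\}$, a finite set of candidates $C$ partitioned into candidate subsets $C_1,\ldots,C_\ell$, positive integer quotas $k_j\le |C_j|$, and approval ballots $A_i\subseteq C$ for $i\in N$. A committee is a set $W\subseteq C$ with $|W\cap C_j|=k_j$ for every $j$. Let $r(0)=0$ and $r(t)=\sum_{p=1}^t 1/p$ for $t\ge1$. The IW-PAV score of $W$ is $\sum_{j=1}^\ell\sum_{i\in N} r(|W\cap A_i\cap C_j|)$. $W$ satisfies Intra-wise JR (IW-JR) if for every $X\subseteq N$ and every $j$, whenever $|X|\ge n/k_j$ and $|(\bigcap_{i\in X}A_i)\cap C_j|\ge 1$, we have $|W\cap C_j\cap \bigcup_{i\in X}A_i|\ge 1$. *)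

theory Defs
  imports Main Complex_Main
begin

text \<open>Approval-based sub-committee voting (SCV). Voters are N = {1..n},
candidate subsets are indexed by j in {1..l} (given by Cs j), quotas are k j,
and ballots are A i.\<close>

definition scv_instance ::
  "nat \<Rightarrow> 'c set \<Rightarrow> nat \<Rightarrow> (nat \<Rightarrow> 'c set) \<Rightarrow> (nat \<Rightarrow> nat) \<Rightarrow> (nat \<Rightarrow> 'c set) \<Rightarrow> bool" where
  "scv_instance n C l Cs k A \<longleftrightarrow>
     n \<ge> 1 \<and> finite C \<and>
     (\<Union>j\<in>{1..l}. Cs j) = C \<and>
     (\<forall>j\<in>{1..l}. \<forall>j'\<in>{1..l}. j \<noteq> j' \<longrightarrow> Cs j \<inter> Cs j' = {}) \<and>
     (\<forall>j\<in>{1..l}. Cs j \<noteq> {}) \<and>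
     (\<forall>j\<in>{1..l}. 1 \<le> k j \<and> k j \<le> card (Cs j)) \<and>
     (\<forall>i\<in>{1..n}. A i \<subseteq> C)"

definition committee ::
  "'c set \<Rightarrow> nat \<Rightarrow> (nat \<Rightarrow> 'c set) \<Rightarrow> (nat \<Rightarrow> nat) \<Rightarrow> 'c set \<Rightarrow> bool" where
  "committee C l Cs k W \<longleftrightarrow> W \<subseteq> C \<and> (\<forall>j\<in>{1..l}. card (W \<inter> Cs j) = k j)"

definition harm :: "nat \<Rightarrow> real" where
  "harm t = (\<Sum>p\<in>{1..t}. 1 / real p)"

definition iw_pav_score ::
  "nat \<Rightarrow> nat \<Rightarrow> (nat \<Rightarrow> 'c set) \<Rightarrow> (nat \<Rightarrow> 'c set) \<Rightarrow> 'c set \<Rightarrow> real" where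
  "iw_pav_score n l Cs A W = (\<Sum>j\<in>{1..l}. \<Sum>i\<in>{1..n}. harm (card (W \<inter> A i \<inter> Cs j)))"

definition iw_jr ::
  "nat \<Rightarrow> nat \<Rightarrow> (nat \<Rightarrow> 'c set) \<Rightarrow> (nat \<Rightarrow> nat) \<Rightarrow> (nat \<Rightarrow> 'c set) \<Rightarrow> 'c set \<Rightarrow> bool" where
  "iw_jr n l Cs k A W \<longleftrightarrow>
     (\<forall>X. X \<subseteq> {1..n} \<longrightarrow> (\<forall>j\<in>{1..l}.
        (real (card X) \<ge> real n / real (k j) \<and> card ((\<Inter>i\<in>X. A i) \<inter> Cs j) \<ge> 1)
        \<longrightarrow> card (W \<inter> Cs j \<inter> (\<Union>i\<in>X. A i)) \<ge> 1))"

end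

theory Submission
  imports Defs
begin

text \<open>Suppose a group X of at least n/k_j voters commonly approves some c in C_j, yet none of
them approves any winner in S = W \<inter> C_j. Removing w from S costs each voter i approving w exactly
1/|S \<inter> A_i|, so summed over all w in S the cost is the number of voters approving somebody in S,
at most n - |X|. Hence some w costs at most (n - |X|)/k_j < |X|, while replacing w by c gains
every member of X a full point: the score strictly increases.\<close>

definition marginal_loss :: "'c set \<Rightarrow> 'c set \<Rightarrow> 'c \<Rightarrow> real" where
  "marginal_loss S B w = (if w \<in> B then 1 / real (card (S \<inter> B)) else 0)"

lemma harm_Suc: "harm (Suc t) = harm t + 1 / real (Suc t)"
  unfolding harm_def by simp

lemma harm_mono: "s \<le> t \<Longrightarrow> harm s \<le> harm t"
  unfolding harm_def by (rule sum_mono2) auto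

lemma harm_0 [simp]: "harm 0 = 0"
  unfolding harm_def by simp

lemma harm_remove:
  assumes "finite S" and "w \<in> S"
  shows "harm (card ((S - {w}) \<inter> B)) = harm (card (S \<inter> B)) - marginal_loss S B w"
proof (cases "w \<in> B")
  case True
  have "(S - {w}) \<inter> B = (S \<inter> B) - {w}" by auto
  moreover have "card (S \<inter> B) = Suc (card ((S \<inter> B) - {w}))"
    using assms True by (simp add: card_Suc_Diff1 del: card_Diff_insert)
  ultimately show ?thesis
    using True by (simp add: marginal_loss_def harm_Suc)
next
  case False
  then have "(S - {w}) \<inter> B = S \<inter> B" by auto
  then show ?thesis
    using False by (simp add: marginal_loss_def)
qed

lemma sum_marginal_loss:
  assumes "finite S" and "finite I"
  shows "(\<Sum>w\<in>S. \<Sum>i\<in>I. marginal_loss S (A i) w) = real (card {i\<in>I. S \<inter> A i \<noteq> {}})"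
proof -
  have voter: "(\<Sum>w\<in>S. marginal_loss S (A i) w) = (if S \<inter> A i \<noteq> {} then 1 else 0)" for i
  proof -
    have "(\<Sum>w\<in>S. marginal_loss S (A i) w) = (\<Sum>w\<in>S \<inter> A i. 1 / real (card (S \<inter> A i)))"
      unfolding marginal_loss_def using assms(1)
      by (simp add: sum.If_cases Int_def)
    also have "\<dots> = (if S \<inter> A i \<noteq> {} then 1 else 0)"
      using assms(1) by (cases "S \<inter> A i = {}") auto
    finally show ?thesis .
  qed
  have "(\<Sum>w\<in>S. \<Sum>i\<in>I. marginal_loss S (A i) w) = (\<Sum>i\<in>I. \<Sum>w\<in>S. marginal_loss S (A i) w)"
    by (rule sum.swap)
  also have "\<dots> = (\<Sum>i\<in>I. if S \<inter> A i \<noteq> {} then 1 else 0)"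
    by (simp add: voter)
  finally show ?thesis
    using assms(2) by (simp add: sum.inter_filter[symmetric])
qed

lemma ex_le_average:
  fixes f :: "'a \<Rightarrow> real"
  assumes "finite S" and "S \<noteq> {}"
  shows "\<exists>x\<in>S. f x * real (card S) \<le> sum f S"
proof -
  have "Min (f ` S) \<in> f ` S"
    using assms by simp
  then obtain x where "x \<in> S" and "f x = Min (f ` S)"
    by (metis imageE)
  then have "\<forall>y\<in>S. f x \<le> f y"
    using assms(1) by simp
  then show ?thesis
    using \<open>x \<in> S\<close> sum_bounded_below[of S "f x" f] by (auto simp: mult.commute)
qed

lemma ex_cheap_member:
  assumes "finite S" and "S \<noteq> {}" and "finite I"
  shows "\<exists>w\<in>S. (\<Sum>i\<in>I. marginal_loss S (A i) w) * real (card S)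
                 \<le> real (card {i\<in>I. S \<inter> A i \<noteq> {}})"
  using ex_le_average[OF assms(1,2), of "\<lambda>w. \<Sum>i\<in>I. marginal_loss S (A i) w"]
    sum_marginal_loss[OF assms(1,3)] by simp

lemma ex_member_loss_less:
  assumes "finite S" and "S \<noteq> {}" and "X \<subseteq> {1..n}" and "X \<noteq> {}"
    and "n \<le> card X * card S" and "\<forall>i\<in>X. S \<inter> A i = {}"
  shows "\<exists>w\<in>S. (\<Sum>i\<in>{1..n}. marginal_loss S (A i) w) < real (card X)"
proof -
  obtain w where "w \<in> S" and cheap: "(\<Sum>i\<in>{1..n}. marginal_loss S (A i) w) * real (card S)
      \<le> real (card {i\<in>{1..n}. S \<inter> A i \<noteq> {}})"
    using ex_cheap_member[OF assms(1,2)] by blast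
  have "card {i\<in>{1..n}. S \<inter> A i \<noteq> {}} \<le> card ({1..n} - X)"
    using assms(6) by (intro card_mono) auto
  also have "\<dots> = n - card X"
    using assms(3) by (simp add: card_Diff_subset finite_subset)
  also have "\<dots> < card X * card S"
  proof -
    have "card X > 0" and "card X * card S > 0"
      using assms(1-4) finite_subset[OF assms(3)] by (simp_all add: card_gt_0_iff)
    then show ?thesis
      using assms(5) by linarith
  qed
  finally have "real (card {i\<in>{1..n}. S \<inter> A i \<noteq> {}}) < real (card X) * real (card S)"
    by (simp only: of_nat_mult[symmetric] of_nat_less_iff)
  with cheap have "(\<Sum>i\<in>{1..n}. marginal_loss S (A i) w) * real (card S) < real (card X) * real (card S)"
    by linarith
  then show ?thesis
    using \<open>w \<in> S\<close> by (meson mult_right_less_imp_less of_nat_0_le_iff)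
qed

lemma committee_part:
  assumes "scv_instance n C l Cs k A" and "committee C l Cs k W" and "j \<in> {1..l}"
  shows "finite (W \<inter> Cs j)" and "card (W \<inter> Cs j) = k j" and "k j \<ge> 1"
proof -
  show "finite (W \<inter> Cs j)"
    using assms(1,2) unfolding scv_instance_def committee_def by (meson finite_Int finite_subset)
  show "card (W \<inter> Cs j) = k j"
    using assms(2,3) unfolding committee_def by auto
  show "k j \<ge> 1"
    using assms(1,3) unfolding scv_instance_def by auto
qed

lemma iw_pav_score_diff_one_part:
  assumes "j \<in> {1..l}" and "\<forall>j'\<in>{1..l} - {j}. W' \<inter> Cs j' = W \<inter> Cs j'"
  shows "iw_pav_score n l Cs A W' - iw_pav_score n l Cs A W
       = (\<Sum>i\<in>{1..n}. harm (card (W' \<inter> A i \<inter> Cs j)) - harm (card (W \<inter> A i \<inter> Cs j)))"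
proof -
  define g where "g V j' = (\<Sum>i\<in>{1..n}. harm (card (V \<inter> A i \<inter> Cs j')))" for V j'
  have "g W' j' = g W j'" if "j' \<in> {1..l} - {j}" for j'
  proof -
    have "W' \<inter> A i \<inter> Cs j' = W \<inter> A i \<inter> Cs j'" for i
      using assms(2) that by blast
    then show ?thesis
      unfolding g_def by simp
  qed
  then have "(\<Sum>j'\<in>{1..l} - {j}. g W' j') = (\<Sum>j'\<in>{1..l} - {j}. g W j')"
    by (rule sum.cong[OF refl])
  then have "iw_pav_score n l Cs A W' - iw_pav_score n l Cs A W = g W' j - g W j"
    unfolding iw_pav_score_def g_def[symmetric]
    using sum.remove[OF _ assms(1), of "g W'"] sum.remove[OF _ assms(1), of "g W"] by simp
  then show ?thesis
    unfolding g_def by (simp add: sum_subtractf)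
qed

lemma committee_swap:
  assumes "scv_instance n C l Cs k A" and "committee C l Cs k W" and "j \<in> {1..l}"
    and "w \<in> W \<inter> Cs j" and "c \<in> Cs j - W"
  shows "committee C l Cs k (insert c (W - {w}))"
  unfolding committee_def
proof (intro conjI ballI)
  have disjoint: "\<forall>j'\<in>{1..l}. j' \<noteq> j \<longrightarrow> Cs j \<inter> Cs j' = {}" and "Cs j \<subseteq> C"
    using assms(1,3) unfolding scv_instance_def by blast+
  then show "insert c (W - {w}) \<subseteq> C"
    using assms(2,5) unfolding committee_def by blast
  fix j' assume j': "j' \<in> {1..l}"
  note part = committee_part[OF assms(1-3)]
  show "card (insert c (W - {w}) \<inter> Cs j') = k j'"
  proof (cases "j' = j")
    case True
    then have "insert c (W - {w}) \<inter> Cs j' = insert c ((W \<inter> Cs j) - {w})"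
      using assms(5) by auto
    with True show ?thesis
      using assms(4,5) part by simp
  next
    case False
    then have "insert c (W - {w}) \<inter> Cs j' = W \<inter> Cs j'"
      using disjoint j' assms(4,5) by blast
    with committee_part(2)[OF assms(1,2) j'] show ?thesis by simp
  qed
qed

text \<open>Replacing w by c: every voter of X goes from 0 to 1 point in part j, every other voter
loses at most its marginal loss.\<close>

lemma iw_pav_score_swap_gain:
  assumes "scv_instance n C l Cs k A" and "committee C l Cs k W" and "j \<in> {1..l}"
    and "X \<subseteq> {1..n}" and "c \<in> Cs j" and "\<forall>i\<in>X. c \<in> A i"
    and "\<forall>i\<in>X. W \<inter> Cs j \<inter> A i = {}" and "w \<in> W \<inter> Cs j"
  shows "iw_pav_score n l Cs A (insert c (W - {w})) - iw_pav_score n l Cs A W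
       \<ge> real (card X) - (\<Sum>i\<in>{1..n}. marginal_loss (W \<inter> Cs j) (A i) w)"
proof -
  define S where "S = W \<inter> Cs j"
  define W' where "W' = insert c (W - {w})"
  have finS: "finite S"
    unfolding S_def by (rule committee_part(1)[OF assms(1-3)])
  have disjoint: "\<forall>j'\<in>{1..l} - {j}. Cs j \<inter> Cs j' = {}"
    using assms(1,3) unfolding scv_instance_def by blast
  then have "\<forall>j'\<in>{1..l} - {j}. W' \<inter> Cs j' = W \<inter> Cs j'"
    unfolding W'_def using assms(5,8) by blast
  note diff = iw_pav_score_diff_one_part[OF assms(3) this]
  have W'_part: "W' \<inter> A i \<inter> Cs j = insert c (S - {w}) \<inter> A i" for i
    unfolding W'_def S_def using assms(5) by auto
  have voter: "harm (card (W' \<inter> A i \<inter> Cs j)) - harm (card (W \<inter> A i \<inter> Cs j))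
      \<ge> (if i \<in> X then 1 else 0) - marginal_loss S (A i) w" for i
  proof (cases "i \<in> X")
    case True
    then have "W' \<inter> A i \<inter> Cs j = {c}" "W \<inter> A i \<inter> Cs j = {}" "w \<notin> A i"
      using assms(6-8) W'_part unfolding S_def by auto
    then show ?thesis
      using True by (simp add: marginal_loss_def harm_Suc)
  next
    case False
    have "card ((S - {w}) \<inter> A i) \<le> card (W' \<inter> A i \<inter> Cs j)"
      unfolding W'_part using finS by (intro card_mono) auto
    then have "harm (card (S \<inter> A i)) - marginal_loss S (A i) w \<le> harm (card (W' \<inter> A i \<inter> Cs j))"
      using harm_mono harm_remove[OF finS] assms(8) unfolding S_def by metis
    moreover have "W \<inter> A i \<inter> Cs j = S \<inter> A i"
      unfolding S_def by blast
    ultimately show ?thesis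
      using False by simp
  qed
  have "real (card X) - (\<Sum>i\<in>{1..n}. marginal_loss S (A i) w)
      = (\<Sum>i\<in>{1..n}. (if i \<in> X then 1 else 0) - marginal_loss S (A i) w)"
    using assms(4) by (simp add: sum_subtractf sum.If_cases Int_absorb1)
  also have "\<dots> \<le> iw_pav_score n l Cs A W' - iw_pav_score n l Cs A W"
    unfolding diff by (rule sum_mono) (rule voter)
  finally show ?thesis
    unfolding S_def W'_def .
qed

theorem mainTheorem9:
  fixes n l :: nat and C :: "'c set" and Cs A :: "nat \<Rightarrow> 'c set" and k :: "nat \<Rightarrow> nat"
    and W :: "'c set"
  assumes "scv_instance n C l Cs k A"
    and "committee C l Cs k W"
    and "\<forall>W'. committee C l Cs k W' \<longrightarrow> iw_pav_score n l Cs A W' \<le> iw_pav_score n l Cs A W"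
  shows "iw_jr n l Cs k A W"
  unfolding iw_jr_def
proof (intro allI impI ballI, elim conjE, rule ccontr)
  fix X j
  assume X: "X \<subseteq> {1..n}" and j: "j \<in> {1..l}" and large: "real n / real (k j) \<le> real (card X)"
    and common: "card ((\<Inter>i\<in>X. A i) \<inter> Cs j) \<ge> 1"
    and "\<not> card (W \<inter> Cs j \<inter> (\<Union>i\<in>X. A i)) \<ge> 1"
  define S where "S = W \<inter> Cs j"
  note part = committee_part[OF assms(1,2) j, folded S_def]
  have "S \<inter> (\<Union>i\<in>X. A i) = {}"
    using \<open>\<not> _ \<ge> 1\<close> part(1) unfolding S_def by (simp add: not_less_eq_eq)
  then have unrepresented: "\<forall>i\<in>X. S \<inter> A i = {}"
    by blast
  have "(\<Inter>i\<in>X. A i) \<inter> Cs j \<noteq> {}"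
    using common by (metis card.empty not_one_le_zero)
  then obtain c where "c \<in> Cs j" and c_common: "\<forall>i\<in>X. c \<in> A i"
    by blast
  have "n \<le> card X * card S"
    using large part(2,3) by (simp add: divide_le_eq flip: of_nat_mult)
  moreover have "n \<ge> 1"
    using assms(1) unfolding scv_instance_def by simp
  ultimately have "X \<noteq> {}" and "S \<noteq> {}"
    by auto
  then obtain w where "w \<in> S" and loss_small: "(\<Sum>i\<in>{1..n}. marginal_loss S (A i) w) < real (card X)"
    using ex_member_loss_less[OF part(1) _ X _ \<open>n \<le> card X * card S\<close> unrepresented] by blast
  have "c \<in> Cs j - W"
    using unrepresented c_common \<open>c \<in> Cs j\<close> \<open>X \<noteq> {}\<close> unfolding S_def by blast
  note unrepresented_W = unrepresented[unfolded S_def] and w_part = \<open>w \<in> S\<close>[unfolded S_def]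
  have "committee C l Cs k (insert c (W - {w}))"
    by (rule committee_swap[OF assms(1,2) j w_part \<open>c \<in> Cs j - W\<close>])
  moreover have "iw_pav_score n l Cs A (insert c (W - {w})) > iw_pav_score n l Cs A W"
    using iw_pav_score_swap_gain[OF assms(1,2) j X \<open>c \<in> Cs j\<close> c_common unrepresented_W w_part]
      loss_small unfolding S_def by linarith
  ultimately show False
    using assms(3) by (meson not_le)
qed

end
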